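(* Let $K$ be a field, $A$ a cocommutative Hopf algebra over $K$ with antipode $S$, and $x\colon X\to A$, $y\colon Y\to A$ inclusions of Hopf subalgebras. The following are equivalent: (a) there exists a (necessarily unique) morphism of Hopf algebras $p\colon X\otimes Y\to A$ with $p(a\otimes 1)=a$ for all $a\in X$ and $p(1\otimes b)=b$ for all $b\in Y$; (b) $ab=ba$ for all $a\in X$ and $b\in Y$; (c) $a_1b_1S(a_2)S(b_2)=\epsilon(a)\epsilon(b)1$ for all $a\in X$ and $b\in Y$.
   Context: Sweedler notation $\Delta(a)=a_1\otimes a_2$ is used. $X\otimes Y$ is the product of $X$ and $Y$ in the category of cocommutative Hopf algebras, with the tensor product Hopf algebra structure; condition (a) says that $X$ and $Y$ commute in the sense of Huq. *)

theory Defs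
  imports Main
begin

text \<open>A vector space over a field 'k is modelled (up to isomorphism, since every
vector space has a basis) as the space of finitely supported functions 'b \<Rightarrow> 'k,
for a basis index type 'b.  The tensor product of such spaces with bases 'a, 'c
is the space of finitely supported functions on 'a \<times> 'c, with u \<otimes> v the
function (i,j) \<mapsto> u i * v j.\<close>

definition fsvec :: "('a \<Rightarrow> 'k::zero) set" where
  "fsvec = {f. finite {x. f x \<noteq> 0}}"

definition bas :: "'a \<Rightarrow> 'a \<Rightarrow> 'k::{zero,one}" where
  "bas i = (\<lambda>j. if j = i then 1 else 0)"

definition vzero :: "'a \<Rightarrow> 'k::zero" where
  "vzero = (\<lambda>_. 0)"

definition vadd :: "('a \<Rightarrow> 'k::plus) \<Rightarrow> ('a \<Rightarrow> 'k) \<Rightarrow> 'a \<Rightarrow> 'k" where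
  "vadd u v = (\<lambda>x. u x + v x)"

definition smul :: "'k::times \<Rightarrow> ('a \<Rightarrow> 'k) \<Rightarrow> 'a \<Rightarrow> 'k" where
  "smul c u = (\<lambda>x. c * u x)"

text \<open>Linear extension: lsum t F = sum over x in supp t of t(x) * F(x), i.e. the
value at t of the linear map sending the basis vector x to F x.\<close>
definition lsum :: "('a \<Rightarrow> 'k::comm_ring_1) \<Rightarrow> ('a \<Rightarrow> 'c \<Rightarrow> 'k) \<Rightarrow> 'c \<Rightarrow> 'k" where
  "lsum t F = (\<lambda>c. \<Sum>x\<in>{x. t x \<noteq> 0}. t x * F x c)"

definition tensor :: "('a \<Rightarrow> 'k::times) \<Rightarrow> ('c \<Rightarrow> 'k) \<Rightarrow> 'a \<times> 'c \<Rightarrow> 'k" where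
  "tensor u v = (\<lambda>(i, j). u i * v j)"

definition linear_on :: "('a \<Rightarrow> 'k::comm_ring_1) set \<Rightarrow> (('a \<Rightarrow> 'k) \<Rightarrow> ('c \<Rightarrow> 'k)) \<Rightarrow> bool" where
  "linear_on V f \<longleftrightarrow>
     (\<forall>u\<in>V. \<forall>v\<in>V. f (vadd u v) = vadd (f u) (f v)) \<and>
     (\<forall>u\<in>V. \<forall>c. f (smul c u) = smul c (f u))"

definition linear_functional_on :: "('a \<Rightarrow> 'k::comm_ring_1) set \<Rightarrow> (('a \<Rightarrow> 'k) \<Rightarrow> 'k) \<Rightarrow> bool" where
  "linear_functional_on V f \<longleftrightarrow>
     (\<forall>u\<in>V. \<forall>v\<in>V. f (vadd u v) = f u + f v) \<and>
     (\<forall>u\<in>V. \<forall>c. f (smul c u) = c * f u)"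

text \<open>The additive (= linear, for subspaces) span of the tensors x \<otimes> y, x \<in> X, y \<in> Y:
the subspace X \<otimes> Y of A \<otimes> A.\<close>
definition tspan :: "('a \<Rightarrow> 'k::comm_ring_1) set \<Rightarrow> ('c \<Rightarrow> 'k) set \<Rightarrow> ('a \<times> 'c \<Rightarrow> 'k) set" where
  "tspan X Y = {t. \<exists>(n::nat) xs ys. (\<forall>k<n. xs k \<in> X \<and> ys k \<in> Y) \<and>
                      t = (\<lambda>p. \<Sum>k<n. tensor (xs k) (ys k) p)}"

record ('b, 'k) hopf =
  hmult :: "('b \<Rightarrow> 'k) \<Rightarrow> ('b \<Rightarrow> 'k) \<Rightarrow> 'b \<Rightarrow> 'k"
  hone :: "'b \<Rightarrow> 'k"
  hcomult :: "('b \<Rightarrow> 'k) \<Rightarrow> 'b \<times> 'b \<Rightarrow> 'k"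
  hcounit :: "('b \<Rightarrow> 'k) \<Rightarrow> 'k"
  hantipode :: "('b \<Rightarrow> 'k) \<Rightarrow> 'b \<Rightarrow> 'k"

definition hopf_algebra :: "('b, 'k::field) hopf \<Rightarrow> bool" where
  "hopf_algebra H \<longleftrightarrow>
    (let m = hmult H; e = hone H; \<Delta> = hcomult H; \<epsilon> = hcounit H; S = hantipode H in
     e \<in> fsvec \<and>
     (\<forall>u\<in>fsvec. \<forall>v\<in>fsvec. m u v \<in> fsvec) \<and>
     (\<forall>u\<in>fsvec. \<Delta> u \<in> fsvec) \<and>
     (\<forall>u\<in>fsvec. S u \<in> fsvec) \<and>
     (\<forall>v\<in>fsvec. linear_on fsvec (\<lambda>u. m u v) \<and> linear_on fsvec (m v)) \<and>
     linear_on fsvec \<Delta> \<and> linear_functional_on fsvec \<epsilon> \<and> linear_on fsvec S \<and>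
     (\<forall>u\<in>fsvec. \<forall>v\<in>fsvec. \<forall>w\<in>fsvec. m (m u v) w = m u (m v w)) \<and>
     (\<forall>u\<in>fsvec. m e u = u \<and> m u e = u) \<and>
     (\<forall>u\<in>fsvec.
        lsum (\<Delta> u) (\<lambda>(i, j). tensor (\<Delta> (bas i)) (bas j)) =
        (\<lambda>((p, q), r). lsum (\<Delta> u) (\<lambda>(i, j). tensor (bas i) (\<Delta> (bas j))) (p, (q, r)))) \<and>
     (\<forall>u\<in>fsvec.
        lsum (\<Delta> u) (\<lambda>(i, j). smul (\<epsilon> (bas i)) (bas j)) = u \<and>
        lsum (\<Delta> u) (\<lambda>(i, j). smul (\<epsilon> (bas j)) (bas i)) = u) \<and>
     (\<forall>u\<in>fsvec. \<forall>v\<in>fsvec.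
        \<Delta> (m u v) = lsum (\<Delta> u) (\<lambda>(i, j). lsum (\<Delta> v) (\<lambda>(k, l).
                         tensor (m (bas i) (bas k)) (m (bas j) (bas l))))) \<and>
     \<Delta> e = tensor e e \<and>
     (\<forall>u\<in>fsvec. \<forall>v\<in>fsvec. \<epsilon> (m u v) = \<epsilon> u * \<epsilon> v) \<and>
     \<epsilon> e = 1 \<and>
     (\<forall>u\<in>fsvec.
        lsum (\<Delta> u) (\<lambda>(i, j). m (S (bas i)) (bas j)) = smul (\<epsilon> u) e \<and>
        lsum (\<Delta> u) (\<lambda>(i, j). m (bas i) (S (bas j))) = smul (\<epsilon> u) e))"

definition cocommutative :: "('b, 'k::field) hopf \<Rightarrow> bool" where
  "cocommutative H \<longleftrightarrow> (\<forall>u\<in>fsvec. \<forall>i j. hcomult H u (i, j) = hcomult H u (j, i))"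

definition hopf_subalgebra :: "('b, 'k::field) hopf \<Rightarrow> ('b \<Rightarrow> 'k) set \<Rightarrow> bool" where
  "hopf_subalgebra H X \<longleftrightarrow>
     X \<subseteq> fsvec \<and> vzero \<in> X \<and>
     (\<forall>u\<in>X. \<forall>v\<in>X. vadd u v \<in> X) \<and> (\<forall>u\<in>X. \<forall>c. smul c u \<in> X) \<and>
     hone H \<in> X \<and> (\<forall>u\<in>X. \<forall>v\<in>X. hmult H u v \<in> X) \<and>
     (\<forall>u\<in>X. hantipode H u \<in> X) \<and>
     (\<forall>u\<in>X. hcomult H u \<in> tspan X X)"

definition tmult :: "('b, 'k::field) hopf \<Rightarrow> ('b \<times> 'b \<Rightarrow> 'k) \<Rightarrow> ('b \<times> 'b \<Rightarrow> 'k) \<Rightarrow> 'b \<times> 'b \<Rightarrow> 'k" where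
  "tmult H s t = lsum s (\<lambda>(i, j). lsum t (\<lambda>(k, l).
       tensor (hmult H (bas i) (bas k)) (hmult H (bas j) (bas l))))"

definition tone :: "('b, 'k::field) hopf \<Rightarrow> 'b \<times> 'b \<Rightarrow> 'k" where
  "tone H = tensor (hone H) (hone H)"

text \<open>\<Delta>(a \<otimes> b) = (a1 \<otimes> b1) \<otimes> (a2 \<otimes> b2).\<close>
definition tcomult :: "('b, 'k::field) hopf \<Rightarrow> ('b \<times> 'b \<Rightarrow> 'k) \<Rightarrow> ('b \<times> 'b) \<times> ('b \<times> 'b) \<Rightarrow> 'k" where
  "tcomult H t = lsum t (\<lambda>(i, j). (\<lambda>((p, r), (q, s)).
       hcomult H (bas i) (p, q) * hcomult H (bas j) (r, s)))"

definition tcounit :: "('b, 'k::field) hopf \<Rightarrow> ('b \<times> 'b \<Rightarrow> 'k) \<Rightarrow> 'k" where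
  "tcounit H t = (\<Sum>(i, j)\<in>{x. t x \<noteq> 0}. t (i, j) * hcounit H (bas i) * hcounit H (bas j))"

text \<open>p is a morphism of Hopf algebras (i.e. of bialgebras; compatibility with the
antipode is then automatic) from X \<otimes> Y to A.  p is given as a linear map on all of
A \<otimes> A (any linear map on the subspace X \<otimes> Y extends, over a field); the morphism
conditions are imposed on X \<otimes> Y only.\<close>
definition tensor_hopf_morphism ::
  "('b, 'k::field) hopf \<Rightarrow> ('b \<Rightarrow> 'k) set \<Rightarrow> ('b \<Rightarrow> 'k) set \<Rightarrow> (('b \<times> 'b \<Rightarrow> 'k) \<Rightarrow> 'b \<Rightarrow> 'k) \<Rightarrow> bool" where
  "tensor_hopf_morphism H X Y p \<longleftrightarrow>
     (\<forall>t\<in>fsvec. p t \<in> fsvec) \<and> linear_on fsvec p \<and>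
     (\<forall>s\<in>tspan X Y. \<forall>t\<in>tspan X Y. p (tmult H s t) = hmult H (p s) (p t)) \<and>
     p (tone H) = hone H \<and>
     (\<forall>t\<in>tspan X Y. hcomult H (p t) =
         lsum (tcomult H t) (\<lambda>(x, y). tensor (p (bas x)) (p (bas y)))) \<and>
     (\<forall>t\<in>tspan X Y. hcounit H (p t) = tcounit H t)"

end

theory Submission
  imports Defs
begin

(* If X and Y commute elementwise, the multiplication map a \<otimes> b \<mapsto> a b is multiplicative on
   X \<otimes> Y; it is comultiplicative and counital on all of A \<otimes> A because \<Delta> and \<epsilon> are
   algebra maps.  Conversely a normalised morphism p satisfies
   p (a \<otimes> b) = p ((a \<otimes> 1)(1 \<otimes> b)) = a b and p (a \<otimes> b) = p ((1 \<otimes> b)(a \<otimes> 1)) = b a,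
   so X and Y commute and p is the multiplication map, which gives uniqueness.
   If X and Y commute, a_1 b_1 S(a_2) S(b_2) = b_1 a_1 S(a_2) S(b_2) = \<epsilon>(a) \<epsilon>(b) 1.
   Conversely, coassociativity with the antipode and counit axioms gives
   [a_1, b_1] b_2 a_2 = a b for all a, b, while a trivial commutator turns the left side into b a.
   Commutation is only available for elements of X and Y, not for basis vectors, so these
   computations run over decompositions \<Delta> a = \<Sigma> x_n \<otimes> x'_n with x_n, x'_n in X. *)

subsection \<open>Finitely supported vectors\<close>

abbreviation vsum :: "'i set \<Rightarrow> ('i \<Rightarrow> 'a \<Rightarrow> 'k::comm_monoid_add) \<Rightarrow> 'a \<Rightarrow> 'k" where
  "vsum A G \<equiv> (\<lambda>c. \<Sum>x\<in>A. G x c)"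

abbreviation tensor_sum ::
  "nat \<Rightarrow> (nat \<Rightarrow> 'a \<Rightarrow> 'k::comm_ring_1) \<Rightarrow> (nat \<Rightarrow> 'c \<Rightarrow> 'k) \<Rightarrow> 'a \<times> 'c \<Rightarrow> 'k" where
  "tensor_sum n xs ys \<equiv> vsum {..<n} (\<lambda>k. tensor (xs k) (ys k))"

lemma fsvec_iff: "u \<in> fsvec \<longleftrightarrow> finite {x. u x \<noteq> 0}"
  by (simp add: fsvec_def)

lemma vsum_fsvec:
  fixes G :: "'i \<Rightarrow> 'a \<Rightarrow> 'k::comm_ring_1"
  assumes "finite A" "\<forall>x\<in>A. G x \<in> fsvec"
  shows "vsum A G \<in> fsvec"
  unfolding fsvec_iff
proof (rule finite_subset[of _ "\<Union>x\<in>A. {c. G x c \<noteq> 0}"])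
  show "{c. (\<Sum>x\<in>A. G x c) \<noteq> 0} \<subseteq> (\<Union>x\<in>A. {c. G x c \<noteq> 0})"
    by (auto intro: ccontr simp: sum.neutral)
  show "finite (\<Union>x\<in>A. {c. G x c \<noteq> 0})"
    using assms by (auto simp: fsvec_def)
qed

lemma smul_fsvec: "(u::'a \<Rightarrow> 'k::comm_ring_1) \<in> fsvec \<Longrightarrow> smul c u \<in> fsvec"
  unfolding fsvec_iff by (rule finite_subset[of _ "{x. u x \<noteq> 0}"]) (auto simp: smul_def)

lemma vadd_fsvec: "(u::'a \<Rightarrow> 'k::comm_ring_1) \<in> fsvec \<Longrightarrow> v \<in> fsvec \<Longrightarrow> vadd u v \<in> fsvec"
  unfolding fsvec_iff
  by (rule finite_subset[of _ "{x. u x \<noteq> 0} \<union> {x. v x \<noteq> 0}"]) (auto simp: vadd_def)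

lemma bas_fsvec: "(bas i :: 'a \<Rightarrow> 'k::zero_neq_one) \<in> fsvec"
  unfolding fsvec_iff by (rule finite_subset[of _ "{i}"]) (auto simp: bas_def)

lemma tensor_fsvec:
  "(a::'a \<Rightarrow> 'k::mult_zero) \<in> fsvec \<Longrightarrow> (b::'c \<Rightarrow> 'k) \<in> fsvec \<Longrightarrow> tensor a b \<in> fsvec"
  unfolding fsvec_iff
  by (rule finite_subset[of _ "{x. a x \<noteq> 0} \<times> {x. b x \<noteq> 0}"]) (auto simp: tensor_def)

lemma tensor_sum_fsvec:
  fixes xs ys :: "nat \<Rightarrow> 'a \<Rightarrow> 'k::comm_ring_1"
  shows "\<forall>k<n. xs k \<in> fsvec \<and> ys k \<in> fsvec \<Longrightarrow> tensor_sum n xs ys \<in> fsvec"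
  by (intro vsum_fsvec) (auto simp: tensor_fsvec)

lemma lsum_as_vsum: "lsum u F = vsum {x. u x \<noteq> 0} (\<lambda>x. smul (u x) (F x))"
  by (simp add: lsum_def smul_def)

lemma lsum_eq_sum_superset:
  assumes "finite A" "{x. u x \<noteq> 0} \<subseteq> A"
  shows "lsum u F c = (\<Sum>x\<in>A. u x * F x c)"
  unfolding lsum_def using assms by (auto intro!: sum.mono_neutral_left)

lemma lsum_fsvec:
  fixes u :: "'a \<Rightarrow> 'k::comm_ring_1"
  assumes "u \<in> fsvec" "\<And>x. F x \<in> fsvec"
  shows "lsum u F \<in> fsvec"
  unfolding lsum_as_vsum using assms by (intro vsum_fsvec) (auto simp: fsvec_iff[of u] smul_fsvec)

lemma lsum_bas: "lsum (bas i :: 'a \<Rightarrow> 'k::comm_ring_1) F = F i"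
proof -
  have "{x. (bas i :: 'a \<Rightarrow> 'k) x \<noteq> 0} = {i}" by (auto simp: bas_def)
  then show ?thesis by (simp add: lsum_def bas_def)
qed

lemma lsum_basis: "u \<in> fsvec \<Longrightarrow> lsum u bas = u"
  by (rule ext) (auto simp: lsum_def bas_def fsvec_iff if_distrib cong: if_cong)

lemma lsum_vadd:
  assumes "u \<in> fsvec" "v \<in> fsvec"
  shows "lsum (vadd u v) F = vadd (lsum u F) (lsum v F)"
proof
  fix c
  let ?A = "{x. u x \<noteq> 0} \<union> {x. v x \<noteq> 0}"
  have A: "finite ?A" using assms by (simp add: fsvec_iff)
  have "lsum (vadd u v) F c = (\<Sum>x\<in>?A. vadd u v x * F x c)"
    by (rule lsum_eq_sum_superset[OF A]) (auto simp: vadd_def)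
  moreover have "lsum u F c = (\<Sum>x\<in>?A. u x * F x c)" by (rule lsum_eq_sum_superset[OF A]) auto
  moreover have "lsum v F c = (\<Sum>x\<in>?A. v x * F x c)" by (rule lsum_eq_sum_superset[OF A]) auto
  ultimately show "lsum (vadd u v) F c = vadd (lsum u F) (lsum v F) c"
    by (simp add: vadd_def distrib_right sum.distrib)
qed

lemma lsum_smul: "lsum (smul (a::'k::field) u) F = smul a (lsum u F)"
proof (cases "a = 0")
  case False
  then have "{x. smul a u x \<noteq> 0} = {x. u x \<noteq> 0}" by (auto simp: smul_def)
  then show ?thesis by (simp add: lsum_def smul_def sum_distrib_left mult.assoc)
qed (simp add: lsum_def smul_def)

lemma lsum_vsum_right: "lsum u (\<lambda>x. vsum A (\<lambda>k. F k x)) = vsum A (\<lambda>k. lsum u (F k))"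
  unfolding lsum_def by (rule ext) (simp add: sum_distrib_left sum.swap[of _ "{x. u x \<noteq> 0}"])

lemma lsum_swap: "lsum u (\<lambda>i. lsum v (\<lambda>j. F i j)) = lsum v (\<lambda>j. lsum u (\<lambda>i. F i j))"
  unfolding lsum_def
  by (rule ext) (simp add: sum_distrib_left sum.swap[of _ "{x. u x \<noteq> 0}"] mult.left_commute)

lemma lsum_tensor:
  fixes a :: "'a \<Rightarrow> 'k::comm_ring_1" and b :: "'b \<Rightarrow> 'k"
  assumes "a \<in> fsvec" "b \<in> fsvec"
  shows "lsum (tensor a b) F = lsum a (\<lambda>i. lsum b (\<lambda>j. F (i, j)))"
proof
  fix c
  let ?A = "{x. a x \<noteq> 0} \<times> {x. b x \<noteq> 0}"
  have "lsum (tensor a b) F c = (\<Sum>x\<in>?A. tensor a b x * F x c)"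
    using assms by (intro lsum_eq_sum_superset) (auto simp: fsvec_iff tensor_def)
  also have "\<dots> = (\<Sum>i\<in>{x. a x \<noteq> 0}. \<Sum>j\<in>{x. b x \<noteq> 0}. a i * (b j * F (i, j) c))"
    by (simp add: sum.cartesian_product tensor_def mult.assoc split_def)
  finally show "lsum (tensor a b) F c = lsum a (\<lambda>i. lsum b (\<lambda>j. F (i, j))) c"
    by (simp add: lsum_def sum_distrib_left)
qed

lemma lsum_reindex:
  assumes "\<And>x. g (h x) = x" "\<And>y. h (g y) = y"
  shows "lsum (\<lambda>x. w (h x)) F = lsum w (\<lambda>y. F (g y))"
  unfolding lsum_def
  by (rule ext, rule sum.reindex_bij_witness[of _ g h]) (auto simp: assms)

lemma fsvec_reindex:
  assumes "w \<in> fsvec" "\<And>x. g (h x) = x" "\<And>y. h (g y) = y"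
  shows "(\<lambda>x. w (h x)) \<in> fsvec"
proof -
  have "{x. w (h x) \<noteq> 0} = g ` {y. w y \<noteq> 0}"
    by (auto simp: assms intro!: image_eqI[of _ g "h _"])
  then show ?thesis using assms(1) by (simp add: fsvec_iff)
qed

definition fs_linear :: "(('a \<Rightarrow> 'k::comm_ring_1) \<Rightarrow> ('c \<Rightarrow> 'k)) \<Rightarrow> bool" where
  "fs_linear f \<longleftrightarrow> linear_on fsvec f \<and> (\<forall>u\<in>fsvec. f u \<in> fsvec)"

lemma fs_linear_linear_on: "fs_linear f \<Longrightarrow> linear_on fsvec f"
  by (simp add: fs_linear_def)

lemma fs_linear_fsvec: "fs_linear f \<Longrightarrow> u \<in> fsvec \<Longrightarrow> f u \<in> fsvec"
  by (simp add: fs_linear_def)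

lemma fs_linear_id: "fs_linear (\<lambda>x. x)"
  by (simp add: fs_linear_def linear_on_def)

lemma fs_linear_comp: "fs_linear f \<Longrightarrow> fs_linear g \<Longrightarrow> fs_linear (\<lambda>x. g (f x))"
  by (simp add: fs_linear_def linear_on_def smul_fsvec vadd_fsvec)

lemma linear_on_comp: "fs_linear f \<Longrightarrow> linear_on fsvec g \<Longrightarrow> linear_on fsvec (\<lambda>x. g (f x))"
  by (simp add: fs_linear_def linear_on_def smul_fsvec vadd_fsvec)

lemma fs_linear_lsum:
  fixes F :: "'a \<Rightarrow> 'c \<Rightarrow> 'k::field"
  shows "\<forall>x. F x \<in> fsvec \<Longrightarrow> fs_linear (\<lambda>u. lsum u F)"
  by (simp add: fs_linear_def linear_on_def lsum_vadd lsum_smul lsum_fsvec)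

lemma linear_on_tensor_left: "linear_on fsvec (\<lambda>x. tensor (x::'a \<Rightarrow> 'k::comm_ring_1) v)"
  unfolding linear_on_def tensor_def vadd_def smul_def
  by (auto intro!: ext simp: distrib_right mult.assoc)

lemma linear_on_tensor_right: "linear_on fsvec (\<lambda>x. tensor u (x::'a \<Rightarrow> 'k::comm_ring_1))"
  unfolding linear_on_def tensor_def vadd_def smul_def
  by (auto intro!: ext simp: distrib_left mult.left_commute)

(* A functional is handled as a linear map into the one-dimensional space unit \<Rightarrow> 'k. *)
lemma linear_on_functional: "linear_functional_on fsvec \<phi> \<Longrightarrow> linear_on fsvec (\<lambda>v (_::unit). \<phi> v)"
  unfolding linear_on_def linear_functional_on_def vadd_def smul_def by auto

lemma linear_on_vzero:
  fixes f :: "('a \<Rightarrow> 'k::comm_ring_1) \<Rightarrow> ('c \<Rightarrow> 'k)"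
  assumes "linear_on fsvec f"
  shows "f vzero = vzero"
proof -
  have "vzero \<in> (fsvec :: ('a \<Rightarrow> 'k) set)" by (simp add: fsvec_def vzero_def)
  then have "f (smul 0 vzero) = smul 0 (f vzero)" using assms unfolding linear_on_def by blast
  then show ?thesis by (simp add: smul_def vzero_def)
qed

lemma linear_on_vsum:
  assumes lin: "linear_on fsvec f" and "finite A" and "\<forall>x\<in>A. G x \<in> fsvec"
  shows "f (vsum A G) = vsum A (\<lambda>x. f (G x))"
  using assms(2,3)
proof (induction A rule: finite_induct)
  case empty
  then show ?case using linear_on_vzero[OF lin] by (simp add: vzero_def)
next
  case (insert a A)
  have "vsum (insert a A) G = vadd (G a) (vsum A G)"
    using insert by (simp add: vadd_def)
  moreover have "vsum A G \<in> fsvec" using insert by (intro vsum_fsvec) auto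
  ultimately have "f (vsum (insert a A) G) = vadd (f (G a)) (f (vsum A G))"
    using lin insert by (simp add: linear_on_def)
  then show ?case using insert by (simp add: vadd_def)
qed

lemma linear_on_lsum:
  assumes lin: "linear_on fsvec f" and u: "u \<in> fsvec" and G: "\<forall>x. G x \<in> fsvec"
  shows "f (lsum u G) = lsum u (\<lambda>x. f (G x))"
proof -
  have "f (lsum u G) = vsum {x. u x \<noteq> 0} (\<lambda>x. f (smul (u x) (G x)))"
    unfolding lsum_as_vsum using u G
    by (intro linear_on_vsum[OF lin]) (auto simp: fsvec_iff[of u] smul_fsvec)
  also have "\<dots> = lsum u (\<lambda>x. f (G x))"
    unfolding lsum_as_vsum using lin G by (simp add: linear_on_def)
  finally show ?thesis .
qed

lemma linear_functional_lsum:
  assumes "linear_functional_on fsvec \<phi>" "u \<in> fsvec" "\<forall>x. G x \<in> fsvec"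
  shows "\<phi> (lsum u G) = lsum u (\<lambda>x _. \<phi> (G x)) ()"
  using linear_on_lsum[OF linear_on_functional[OF assms(1)] assms(2,3)] by metis

lemma linear_on_expand: "linear_on fsvec f \<Longrightarrow> u \<in> fsvec \<Longrightarrow> f u = lsum u (\<lambda>i. f (bas i))"
  using linear_on_lsum[of f u bas] by (simp add: lsum_basis bas_fsvec)

lemma lsum_vsum:
  fixes G :: "'i \<Rightarrow> 'a \<Rightarrow> 'k::field"
  assumes "finite A" "\<forall>k\<in>A. G k \<in> fsvec"
  shows "lsum (vsum A G) F = vsum A (\<lambda>k. lsum (G k) F)"
  using fs_linear_linear_on[OF fs_linear_lsum] linear_on_vsum[of "\<lambda>u. lsum u F", OF _ assms]
  by (simp add: linear_on_def lsum_vadd lsum_smul)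

lemma lsum_lsum:
  fixes w :: "'a \<Rightarrow> 'k::field"
  assumes "w \<in> fsvec" "\<forall>x. G x \<in> fsvec"
  shows "lsum (lsum w G) F = lsum w (\<lambda>x. lsum (G x) F)"
  using linear_on_lsum[of "\<lambda>u. lsum u F", OF _ assms]
  by (simp add: linear_on_def lsum_vadd lsum_smul)

lemma bilinear_expand:
  fixes Q :: "('a \<Rightarrow> 'k::comm_ring_1) \<Rightarrow> ('b \<Rightarrow> 'k) \<Rightarrow> 'c \<Rightarrow> 'k"
  assumes "\<And>y. y \<in> fsvec \<Longrightarrow> linear_on fsvec (\<lambda>x. Q x y)"
    and "\<And>x. x \<in> fsvec \<Longrightarrow> linear_on fsvec (\<lambda>y. Q x y)"
    and "x \<in> fsvec" "y \<in> fsvec"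
  shows "Q x y = lsum x (\<lambda>i. lsum y (\<lambda>j. Q (bas i) (bas j)))"
  using linear_on_expand[OF assms(1) assms(3)] linear_on_expand[OF assms(2)[OF bas_fsvec] assms(4)]
    assms(4) by simp

lemma multilinear4_expand:
  fixes Q :: "('a1 \<Rightarrow> 'k::comm_ring_1) \<Rightarrow> ('a2 \<Rightarrow> 'k) \<Rightarrow> ('a3 \<Rightarrow> 'k) \<Rightarrow> ('a4 \<Rightarrow> 'k) \<Rightarrow> 'c \<Rightarrow> 'k"
  assumes "\<And>b c d. b \<in> fsvec \<Longrightarrow> c \<in> fsvec \<Longrightarrow> d \<in> fsvec \<Longrightarrow> linear_on fsvec (\<lambda>x. Q x b c d)"
    and "\<And>a c d. a \<in> fsvec \<Longrightarrow> c \<in> fsvec \<Longrightarrow> d \<in> fsvec \<Longrightarrow> linear_on fsvec (\<lambda>x. Q a x c d)"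
    and "\<And>a b d. a \<in> fsvec \<Longrightarrow> b \<in> fsvec \<Longrightarrow> d \<in> fsvec \<Longrightarrow> linear_on fsvec (\<lambda>x. Q a b x d)"
    and "\<And>a b c. a \<in> fsvec \<Longrightarrow> b \<in> fsvec \<Longrightarrow> c \<in> fsvec \<Longrightarrow> linear_on fsvec (\<lambda>x. Q a b c x)"
    and "a \<in> fsvec" "b \<in> fsvec" "c \<in> fsvec" "d \<in> fsvec"
  shows "Q a b c d = lsum a (\<lambda>i. lsum b (\<lambda>j. lsum c (\<lambda>k. lsum d (\<lambda>l.
            Q (bas i) (bas j) (bas k) (bas l)))))"
  using linear_on_expand[OF assms(1)[OF assms(6-8)] assms(5)]
    linear_on_expand[OF assms(2)[OF bas_fsvec assms(7,8)] assms(6)]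
    linear_on_expand[OF assms(3)[OF bas_fsvec bas_fsvec assms(8)] assms(7)]
    linear_on_expand[OF assms(4)[OF bas_fsvec bas_fsvec bas_fsvec] assms(8)]
  by simp

lemma tspanE:
  assumes "t \<in> tspan X Y"
  obtains n xs ys where "\<forall>k<n. xs k \<in> X \<and> ys k \<in> Y" "t = tensor_sum n xs ys"
  using assms unfolding tspan_def by blast

lemma tensor_in_tspan: "a \<in> X \<Longrightarrow> b \<in> Y \<Longrightarrow> tensor a b \<in> tspan X Y"
  unfolding tspan_def by (rule CollectI, rule exI[of _ 1]) auto

lemma lsum_tensor_sum_bilinear:
  fixes xs :: "nat \<Rightarrow> 'a \<Rightarrow> 'k::field" and ys :: "nat \<Rightarrow> 'b \<Rightarrow> 'k"
    and Q :: "('a \<Rightarrow> 'k) \<Rightarrow> ('b \<Rightarrow> 'k) \<Rightarrow> 'c \<Rightarrow> 'k"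
  assumes "\<forall>k<n. xs k \<in> fsvec \<and> ys k \<in> fsvec"
    and "\<And>y. y \<in> fsvec \<Longrightarrow> linear_on fsvec (\<lambda>x. Q x y)"
    and "\<And>x. x \<in> fsvec \<Longrightarrow> linear_on fsvec (\<lambda>y. Q x y)"
  shows "lsum (tensor_sum n xs ys) (\<lambda>(i, j). Q (bas i) (bas j)) = vsum {..<n} (\<lambda>k. Q (xs k) (ys k))"
  using assms
  by (simp add: lsum_vsum tensor_fsvec lsum_tensor bilinear_expand[where Q = Q, symmetric])

lemma lsum_tensor_sum_multilinear4:
  fixes xs :: "nat \<Rightarrow> 'a1 \<Rightarrow> 'k::field" and xs' :: "nat \<Rightarrow> 'a2 \<Rightarrow> 'k"
    and ys :: "nat \<Rightarrow> 'a3 \<Rightarrow> 'k" and ys' :: "nat \<Rightarrow> 'a4 \<Rightarrow> 'k"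
    and Q :: "('a1 \<Rightarrow> 'k) \<Rightarrow> ('a2 \<Rightarrow> 'k) \<Rightarrow> ('a3 \<Rightarrow> 'k) \<Rightarrow> ('a4 \<Rightarrow> 'k) \<Rightarrow> 'c \<Rightarrow> 'k"
  assumes "\<forall>n<N. xs n \<in> fsvec \<and> xs' n \<in> fsvec" "\<forall>k<K. ys k \<in> fsvec \<and> ys' k \<in> fsvec"
    and "\<And>b c d. b \<in> fsvec \<Longrightarrow> c \<in> fsvec \<Longrightarrow> d \<in> fsvec \<Longrightarrow> linear_on fsvec (\<lambda>x. Q x b c d)"
    and "\<And>a c d. a \<in> fsvec \<Longrightarrow> c \<in> fsvec \<Longrightarrow> d \<in> fsvec \<Longrightarrow> linear_on fsvec (\<lambda>x. Q a x c d)"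
    and "\<And>a b d. a \<in> fsvec \<Longrightarrow> b \<in> fsvec \<Longrightarrow> d \<in> fsvec \<Longrightarrow> linear_on fsvec (\<lambda>x. Q a b x d)"
    and "\<And>a b c. a \<in> fsvec \<Longrightarrow> b \<in> fsvec \<Longrightarrow> c \<in> fsvec \<Longrightarrow> linear_on fsvec (\<lambda>x. Q a b c x)"
  shows "lsum (tensor_sum N xs xs') (\<lambda>(i, j). lsum (tensor_sum K ys ys') (\<lambda>(k, l).
           Q (bas i) (bas j) (bas k) (bas l)))
       = vsum {..<N} (\<lambda>n. vsum {..<K} (\<lambda>k. Q (xs n) (xs' n) (ys k) (ys' k)))"
  using assms(1,2)
  by (simp add: lsum_vsum tensor_fsvec lsum_tensor lsum_vsum_right
      multilinear4_expand[where Q = Q, OF assms(3-6), symmetric])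

lemma hopf_subalgebra_fsvec: "hopf_subalgebra H X \<Longrightarrow> X \<subseteq> fsvec"
  by (simp add: hopf_subalgebra_def)

lemma hopf_subalgebra_one: "hopf_subalgebra H X \<Longrightarrow> hone H \<in> X"
  by (simp add: hopf_subalgebra_def)

lemma hopf_subalgebra_comult: "hopf_subalgebra H X \<Longrightarrow> u \<in> X \<Longrightarrow> hcomult H u \<in> tspan X X"
  by (simp add: hopf_subalgebra_def)

locale hopf_alg =
  fixes H :: "('b, 'k::field) hopf"
  assumes hopf: "hopf_algebra H"
begin

abbreviation "mul \<equiv> hmult H"
abbreviation one_H ("\<one>") where "\<one> \<equiv> hone H"
abbreviation "\<Delta> \<equiv> hcomult H"
abbreviation "\<epsilon> \<equiv> hcounit H"
abbreviation "S \<equiv> hantipode H"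

lemmas hopf_unfolded = hopf[unfolded hopf_algebra_def Let_def]

lemma one_fsvec: "\<one> \<in> fsvec" using hopf_unfolded by blast
lemma mul_fsvec: "u \<in> fsvec \<Longrightarrow> v \<in> fsvec \<Longrightarrow> mul u v \<in> fsvec" using hopf_unfolded by blast
lemma comult_fsvec: "u \<in> fsvec \<Longrightarrow> \<Delta> u \<in> fsvec" using hopf_unfolded by blast
lemma antipode_fsvec: "u \<in> fsvec \<Longrightarrow> S u \<in> fsvec" using hopf_unfolded by blast

lemma fs_linear_mul_left: "v \<in> fsvec \<Longrightarrow> fs_linear (\<lambda>u. mul u v)"
  using hopf_unfolded mul_fsvec unfolding fs_linear_def by blast
lemma fs_linear_mul_right: "u \<in> fsvec \<Longrightarrow> fs_linear (mul u)"
  using hopf_unfolded mul_fsvec unfolding fs_linear_def by blast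
lemma fs_linear_comult: "fs_linear \<Delta>"
  using hopf_unfolded comult_fsvec unfolding fs_linear_def by blast
lemma fs_linear_antipode: "fs_linear S"
  using hopf_unfolded antipode_fsvec unfolding fs_linear_def by blast
lemma linear_functional_counit: "linear_functional_on fsvec \<epsilon>"
  using hopf_unfolded by blast

lemma mul_assoc: "u \<in> fsvec \<Longrightarrow> v \<in> fsvec \<Longrightarrow> w \<in> fsvec \<Longrightarrow> mul (mul u v) w = mul u (mul v w)"
  using hopf_unfolded by blast
lemma mul_one_left: "u \<in> fsvec \<Longrightarrow> mul \<one> u = u" using hopf_unfolded by blast
lemma mul_one_right: "u \<in> fsvec \<Longrightarrow> mul u \<one> = u" using hopf_unfolded by blast
lemma coassoc: "u \<in> fsvec \<Longrightarrow> lsum (\<Delta> u) (\<lambda>(i, j). tensor (\<Delta> (bas i)) (bas j)) =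
        (\<lambda>((p, q), r). lsum (\<Delta> u) (\<lambda>(i, j). tensor (bas i) (\<Delta> (bas j))) (p, (q, r)))"
  using hopf_unfolded by blast
lemma counit_left: "u \<in> fsvec \<Longrightarrow> lsum (\<Delta> u) (\<lambda>(i, j). smul (\<epsilon> (bas i)) (bas j)) = u"
  using hopf_unfolded by blast
lemma counit_right: "u \<in> fsvec \<Longrightarrow> lsum (\<Delta> u) (\<lambda>(i, j). smul (\<epsilon> (bas j)) (bas i)) = u"
  using hopf_unfolded by blast
lemma comult_mul: "u \<in> fsvec \<Longrightarrow> v \<in> fsvec \<Longrightarrow>
        \<Delta> (mul u v) = lsum (\<Delta> u) (\<lambda>(i, j). lsum (\<Delta> v) (\<lambda>(k, l).
                         tensor (mul (bas i) (bas k)) (mul (bas j) (bas l))))"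
  using hopf_unfolded by blast
lemma counit_mul: "u \<in> fsvec \<Longrightarrow> v \<in> fsvec \<Longrightarrow> \<epsilon> (mul u v) = \<epsilon> u * \<epsilon> v" using hopf_unfolded by blast
lemma antipode_left: "u \<in> fsvec \<Longrightarrow> lsum (\<Delta> u) (\<lambda>(i, j). mul (S (bas i)) (bas j)) = smul (\<epsilon> u) \<one>"
  using hopf_unfolded by blast
lemma antipode_right: "u \<in> fsvec \<Longrightarrow> lsum (\<Delta> u) (\<lambda>(i, j). mul (bas i) (S (bas j))) = smul (\<epsilon> u) \<one>"
  using hopf_unfolded by blast

lemma fs_linear_mul_leftI: "fs_linear f \<Longrightarrow> v \<in> fsvec \<Longrightarrow> fs_linear (\<lambda>x. mul (f x) v)"
  by (rule fs_linear_comp[OF _ fs_linear_mul_left])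
lemma fs_linear_mul_rightI: "fs_linear f \<Longrightarrow> u \<in> fsvec \<Longrightarrow> fs_linear (\<lambda>x. mul u (f x))"
  by (rule fs_linear_comp[OF _ fs_linear_mul_right])
lemma fs_linear_antipodeI: "fs_linear f \<Longrightarrow> fs_linear (\<lambda>x. S (f x))"
  by (rule fs_linear_comp[OF _ fs_linear_antipode])

lemmas fs_linear_intros = fs_linear_linear_on fs_linear_id fs_linear_mul_leftI fs_linear_mul_rightI
  fs_linear_antipodeI mul_fsvec antipode_fsvec one_fsvec bas_fsvec

lemma mul_smul_left: "u \<in> fsvec \<Longrightarrow> v \<in> fsvec \<Longrightarrow> mul (smul c u) v = smul c (mul u v)"
  using fs_linear_mul_left[of v] unfolding fs_linear_def linear_on_def by blast
lemma mul_smul_right: "u \<in> fsvec \<Longrightarrow> v \<in> fsvec \<Longrightarrow> mul v (smul c u) = smul c (mul v u)"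
  using fs_linear_mul_right[of v] unfolding fs_linear_def linear_on_def by blast

lemma mul_lsum_left:
  "u \<in> fsvec \<Longrightarrow> (\<And>x. G x \<in> fsvec) \<Longrightarrow> v \<in> fsvec \<Longrightarrow> mul (lsum u G) v = lsum u (\<lambda>x. mul (G x) v)"
  by (rule linear_on_lsum[where f = "\<lambda>w. mul w v"]) (auto intro!: fs_linear_intros fs_linear_mul_left)

lemma lsum_comult_coassoc:
  assumes u: "u \<in> fsvec"
  shows "lsum (\<Delta> u) (\<lambda>z. lsum (\<Delta> (bas (fst z))) (\<lambda>z'. F (fst z') (snd z') (snd z)))
       = lsum (\<Delta> u) (\<lambda>z. lsum (\<Delta> (bas (snd z))) (\<lambda>z'. F (fst z) (fst z') (snd z')))"
proof -
  define W1 where "W1 = lsum (\<Delta> u) (\<lambda>(i, j). tensor (\<Delta> (bas i)) (bas j))"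
  define W2 where "W2 = lsum (\<Delta> u) (\<lambda>(i, j). tensor (bas i) (\<Delta> (bas j)))"
  define ra :: "('b \<times> 'b) \<times> 'b \<Rightarrow> 'b \<times> 'b \<times> 'b" where "ra = (\<lambda>((p, q), r). (p, (q, r)))"
  define la :: "'b \<times> 'b \<times> 'b \<Rightarrow> ('b \<times> 'b) \<times> 'b" where "la = (\<lambda>(p, (q, r)). ((p, q), r))"
  have fs1: "\<forall>x. (case x of (i, j) \<Rightarrow> tensor (\<Delta> (bas i)) (bas j)) \<in> fsvec"
    and fs2: "\<forall>x. (case x of (i, j) \<Rightarrow> tensor (bas i) (\<Delta> (bas j))) \<in> fsvec"
    by (auto intro!: tensor_fsvec comult_fsvec bas_fsvec split: prod.split)
  have "lsum (\<Delta> u) (\<lambda>z. lsum (\<Delta> (bas (fst z))) (\<lambda>z'. F (fst z') (snd z') (snd z)))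
      = lsum W1 (\<lambda>x. F (fst (fst x)) (snd (fst x)) (snd x))"
    unfolding W1_def lsum_lsum[OF comult_fsvec[OF u] fs1]
    by (simp add: comult_fsvec lsum_tensor bas_fsvec lsum_bas split_def)
  also have "W1 = (\<lambda>x. W2 (ra x))"
    unfolding W1_def W2_def ra_def using coassoc[OF u] by (simp add: split_def)
  also have "lsum (\<lambda>x. W2 (ra x)) (\<lambda>x. F (fst (fst x)) (snd (fst x)) (snd x))
      = lsum W2 (\<lambda>x. F (fst x) (fst (snd x)) (snd (snd x)))"
    by (subst lsum_reindex[where g = la]) (auto simp: ra_def la_def split_def split: prod.split)
  also have "\<dots> = lsum (\<Delta> u) (\<lambda>z. lsum (\<Delta> (bas (snd z))) (\<lambda>z'. F (fst z) (fst z') (snd z')))"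
    unfolding W2_def lsum_lsum[OF comult_fsvec[OF u] fs2]
    by (simp add: comult_fsvec lsum_tensor bas_fsvec lsum_bas split_def)
  finally show ?thesis .
qed

lemma lsum_comult_antipode_cancel:
  assumes u: "u \<in> fsvec" and z: "z \<in> fsvec" and g: "fs_linear g"
  shows "lsum (\<Delta> u) (\<lambda>w. g (mul (mul z (S (bas (fst w)))) (bas (snd w)))) = smul (\<epsilon> u) (g z)"
proof -
  let ?f = "\<lambda>v. g (mul z v)"
  have f: "fs_linear ?f" by (rule fs_linear_comp[OF fs_linear_mul_right[OF z] g])
  have "lsum (\<Delta> u) (\<lambda>w. g (mul (mul z (S (bas (fst w)))) (bas (snd w))))
      = lsum (\<Delta> u) (\<lambda>w. ?f (mul (S (bas (fst w))) (bas (snd w))))"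
    using z by (simp add: mul_assoc antipode_fsvec bas_fsvec)
  also have "\<dots> = ?f (lsum (\<Delta> u) (\<lambda>w. mul (S (bas (fst w))) (bas (snd w))))"
    by (rule linear_on_lsum[OF fs_linear_linear_on[OF f] comult_fsvec[OF u], symmetric])
      (auto intro: fs_linear_intros)
  also have "lsum (\<Delta> u) (\<lambda>w. mul (S (bas (fst w))) (bas (snd w))) = smul (\<epsilon> u) \<one>"
    using antipode_left[OF u] by (simp add: split_def)
  also have "?f (smul (\<epsilon> u) \<one>) = smul (\<epsilon> u) (g z)"
    using f one_fsvec z unfolding fs_linear_def linear_on_def by (simp add: mul_one_right)
  finally show ?thesis .
qed

lemma lsum_comult_counit_right:
  assumes u: "u \<in> fsvec" and f: "fs_linear f"
  shows "lsum (\<Delta> u) (\<lambda>w. smul (\<epsilon> (bas (snd w))) (f (bas (fst w)))) = f u"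
proof -
  have "lsum (\<Delta> u) (\<lambda>w. smul (\<epsilon> (bas (snd w))) (f (bas (fst w))))
      = lsum (\<Delta> u) (\<lambda>w. f (smul (\<epsilon> (bas (snd w))) (bas (fst w))))"
    using f unfolding fs_linear_def linear_on_def by (simp add: bas_fsvec)
  also have "\<dots> = f (lsum (\<Delta> u) (\<lambda>w. smul (\<epsilon> (bas (snd w))) (bas (fst w))))"
    by (rule linear_on_lsum[OF fs_linear_linear_on[OF f] comult_fsvec[OF u], symmetric])
      (auto intro: smul_fsvec bas_fsvec)
  also have "lsum (\<Delta> u) (\<lambda>w. smul (\<epsilon> (bas (snd w))) (bas (fst w))) = u"
    using counit_right[OF u] by (simp add: split_def)
  finally show ?thesis .
qed

lemma antipode_right_tensor_sum:
  assumes "u \<in> fsvec" "\<Delta> u = tensor_sum n xs xs'" "\<forall>k<n. xs k \<in> fsvec \<and> xs' k \<in> fsvec"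
  shows "vsum {..<n} (\<lambda>k. mul (xs k) (S (xs' k))) = smul (\<epsilon> u) \<one>"
proof -
  have "vsum {..<n} (\<lambda>k. mul (xs k) (S (xs' k)))
      = lsum (tensor_sum n xs xs') (\<lambda>(i, j). mul (bas i) (S (bas j)))"
    by (rule lsum_tensor_sum_bilinear[symmetric]) (use assms(3) in \<open>auto intro!: fs_linear_intros\<close>)
  then show ?thesis using antipode_right[OF assms(1)] assms(2) by simp
qed

lemma counit_left_tensor_sum:
  assumes "u \<in> fsvec" "\<Delta> u = tensor_sum n xs xs'" "\<forall>k<n. xs k \<in> fsvec \<and> xs' k \<in> fsvec"
  shows "vsum {..<n} (\<lambda>k. smul (\<epsilon> (xs k)) (xs' k)) = u"
proof -
  have "linear_on fsvec (\<lambda>x. smul (\<epsilon> x) y)" "linear_on fsvec (\<lambda>y. smul (\<epsilon> x) y)" for x y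
    using linear_functional_counit
    by (auto simp: linear_on_def linear_functional_on_def vadd_def smul_def algebra_simps)
  then have "vsum {..<n} (\<lambda>k. smul (\<epsilon> (xs k)) (xs' k))
      = lsum (tensor_sum n xs xs') (\<lambda>(i, j). smul (\<epsilon> (bas i)) (bas j))"
    by (intro lsum_tensor_sum_bilinear[symmetric] assms(3))
  then show ?thesis using counit_left[OF assms(1)] assms(2) by simp
qed

subsection \<open>The multiplication map\<close>

definition mult_map :: "('b \<times> 'b \<Rightarrow> 'k) \<Rightarrow> 'b \<Rightarrow> 'k" where
  "mult_map t = lsum t (\<lambda>(i, j). mul (bas i) (bas j))"

lemma fs_linear_mult_map: "fs_linear mult_map"
  unfolding mult_map_def
  by (rule fs_linear_lsum) (auto simp: mul_fsvec bas_fsvec split: prod.split)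

lemma mul_expand: "u \<in> fsvec \<Longrightarrow> v \<in> fsvec \<Longrightarrow> mul u v = lsum u (\<lambda>i. lsum v (\<lambda>j. mul (bas i) (bas j)))"
  by (rule bilinear_expand) (auto intro!: fs_linear_intros)

lemma mult_map_tensor: "a \<in> fsvec \<Longrightarrow> b \<in> fsvec \<Longrightarrow> mult_map (tensor a b) = mul a b"
  by (simp add: mult_map_def lsum_tensor mul_expand)

lemma mult_map_tensor_sum:
  "\<forall>k<n. xs k \<in> fsvec \<and> ys k \<in> fsvec \<Longrightarrow>
    mult_map (tensor_sum n xs ys) = vsum {..<n} (\<lambda>k. mul (xs k) (ys k))"
  unfolding mult_map_def by (rule lsum_tensor_sum_bilinear) (auto intro!: fs_linear_intros)

lemma tmult_tensor_sum:
  assumes "\<forall>k<n. xs k \<in> fsvec \<and> ys k \<in> fsvec" "\<forall>k<n'. xs' k \<in> fsvec \<and> ys' k \<in> fsvec"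
  shows "tmult H (tensor_sum n xs ys) (tensor_sum n' xs' ys')
     = vsum {..<n} (\<lambda>j. vsum {..<n'} (\<lambda>k. tensor (mul (xs j) (xs' k)) (mul (ys j) (ys' k))))"
  unfolding tmult_def using assms
  by (rule lsum_tensor_sum_multilinear4[where Q = "\<lambda>a b c d. tensor (mul a c) (mul b d)"])
    (auto intro!: fs_linear_intros linear_on_comp[OF _ linear_on_tensor_left]
      linear_on_comp[OF _ linear_on_tensor_right])

lemma mul_vsum_vsum:
  assumes "finite A" "finite B" "\<forall>j\<in>A. f j \<in> fsvec" "\<forall>k\<in>B. g k \<in> fsvec"
  shows "mul (vsum A f) (vsum B g) = vsum A (\<lambda>j. vsum B (\<lambda>k. mul (f j) (g k)))"
proof -
  have "mul (vsum A f) (vsum B g) = vsum A (\<lambda>j. mul (f j) (vsum B g))"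
    using assms by (intro linear_on_vsum) (auto intro!: fs_linear_intros vsum_fsvec fs_linear_mul_left)
  also have "\<dots> = vsum A (\<lambda>j. vsum B (\<lambda>k. mul (f j) (g k)))"
    using assms by (intro ext sum.cong refl, subst linear_on_vsum)
      (auto intro!: fs_linear_intros fs_linear_mul_right)
  finally show ?thesis .
qed

lemma mul_interchange:
  assumes "x \<in> fsvec" "x' \<in> fsvec" "y \<in> fsvec" "y' \<in> fsvec" "mul y x' = mul x' y"
  shows "mul (mul x x') (mul y y') = mul (mul x y) (mul x' y')"
proof -
  have "mul (mul x x') (mul y y') = mul x (mul (mul x' y) y')"
    using assms by (simp add: mul_assoc mul_fsvec)
  also have "\<dots> = mul (mul x y) (mul x' y')"
    using assms by (simp flip: \<open>mul y x' = mul x' y\<close>) (simp add: mul_assoc mul_fsvec)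
  finally show ?thesis .
qed

lemma mult_map_tmult:
  assumes X: "X \<subseteq> fsvec" and Y: "Y \<subseteq> fsvec" and comm: "\<forall>a\<in>X. \<forall>b\<in>Y. mul a b = mul b a"
    and "s \<in> tspan X Y" "t \<in> tspan X Y"
  shows "mult_map (tmult H s t) = mul (mult_map s) (mult_map t)"
proof -
  obtain n xs ys where xy: "\<forall>k<n. xs k \<in> X \<and> ys k \<in> Y" and s: "s = tensor_sum n xs ys"
    using \<open>s \<in> tspan X Y\<close> by (rule tspanE)
  obtain n' xs' ys' where xy': "\<forall>k<n'. xs' k \<in> X \<and> ys' k \<in> Y" and t: "t = tensor_sum n' xs' ys'"
    using \<open>t \<in> tspan X Y\<close> by (rule tspanE)
  have fs: "\<forall>k<n. xs k \<in> fsvec \<and> ys k \<in> fsvec" "\<forall>k<n'. xs' k \<in> fsvec \<and> ys' k \<in> fsvec"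
    using xy xy' X Y by blast+
  have "mult_map (tmult H s t)
      = vsum {..<n} (\<lambda>j. vsum {..<n'} (\<lambda>k. mul (mul (xs j) (xs' k)) (mul (ys j) (ys' k))))"
    unfolding s t tmult_tensor_sum[OF fs] using fs
    by (simp add: linear_on_vsum[OF fs_linear_linear_on[OF fs_linear_mult_map]] vsum_fsvec
        tensor_fsvec mul_fsvec mult_map_tensor)
  also have "\<dots> = vsum {..<n} (\<lambda>j. vsum {..<n'} (\<lambda>k. mul (mul (xs j) (ys j)) (mul (xs' k) (ys' k))))"
  proof (intro ext sum.cong refl)
    fix c j k assume "j \<in> {..<n}" "k \<in> {..<n'}"
    then have "xs' k \<in> X" "ys j \<in> Y"
      and "xs j \<in> fsvec" "xs' k \<in> fsvec" "ys j \<in> fsvec" "ys' k \<in> fsvec"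
      using xy xy' fs by auto
    moreover from this(1,2) have "mul (ys j) (xs' k) = mul (xs' k) (ys j)"
      using comm by metis
    ultimately show "mul (mul (xs j) (xs' k)) (mul (ys j) (ys' k)) c
             = mul (mul (xs j) (ys j)) (mul (xs' k) (ys' k)) c"
      using mul_interchange[of "xs j" "xs' k" "ys j" "ys' k"] by simp
  qed
  also have "\<dots> = mul (mult_map s) (mult_map t)"
    unfolding s t using fs by (simp add: mult_map_tensor_sum mul_vsum_vsum mul_fsvec)
  finally show ?thesis .
qed

definition swap_middle :: "('x \<times> 'x) \<times> ('x \<times> 'x) \<Rightarrow> ('x \<times> 'x) \<times> ('x \<times> 'x)" where
  "swap_middle = (\<lambda>((p, r), (q, s)). ((p, q), (r, s)))"

lemma swap_middle_swap_middle: "swap_middle (swap_middle z) = z"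
  by (auto simp: swap_middle_def split: prod.split)

lemma tcomult_bas:
  "tcomult H (bas (i, j)) = (\<lambda>z. tensor (\<Delta> (bas i)) (\<Delta> (bas j)) (swap_middle z))"
  by (auto simp: tcomult_def lsum_bas swap_middle_def tensor_def split: prod.split)

lemma lsum_tcomult_bas:
  "lsum (tcomult H (bas z)) F
     = lsum (\<Delta> (bas (fst z))) (\<lambda>w. lsum (\<Delta> (bas (snd z))) (\<lambda>w'. F ((fst w, fst w'), (snd w, snd w'))))"
  unfolding tcomult_bas[of "fst z" "snd z", simplified]
  by (simp add: lsum_reindex[where g = swap_middle] swap_middle_swap_middle lsum_tensor
      comult_fsvec bas_fsvec) (simp add: swap_middle_def split_def)

lemma mult_map_comult:
  assumes t: "t \<in> fsvec"
  shows "\<Delta> (mult_map t) = lsum (tcomult H t) (\<lambda>(x, y). tensor (mult_map (bas x)) (mult_map (bas y)))"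
proof -
  have "tcomult H t = lsum t (\<lambda>z. tcomult H (bas z))"
    by (simp add: tcomult_def lsum_bas split_def)
  moreover have "\<forall>z. tcomult H (bas z) \<in> fsvec"
    unfolding tcomult_bas split_paired_All
    by (auto intro!: fsvec_reindex[where g = swap_middle] swap_middle_swap_middle
        tensor_fsvec comult_fsvec bas_fsvec)
  ultimately have "lsum (tcomult H t) (\<lambda>(x, y). tensor (mult_map (bas x)) (mult_map (bas y)))
      = lsum t (\<lambda>(i, j). \<Delta> (mul (bas i) (bas j)))"
    using t by (simp add: lsum_lsum split_def lsum_tcomult_bas comult_mul bas_fsvec mult_map_def lsum_bas)
  also have "\<dots> = \<Delta> (mult_map t)"
    unfolding mult_map_def using t
    by (subst linear_on_lsum[OF fs_linear_linear_on[OF fs_linear_comult]])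
      (auto simp: mul_fsvec bas_fsvec split_def)
  finally show ?thesis ..
qed

lemma mult_map_counit: "t \<in> fsvec \<Longrightarrow> \<epsilon> (mult_map t) = tcounit H t"
  unfolding mult_map_def
  by (subst linear_functional_lsum[OF linear_functional_counit])
    (auto simp: mul_fsvec bas_fsvec lsum_def tcounit_def counit_mul mult.assoc
      intro!: sum.cong split: prod.split)

lemma tensor_hopf_morphism_mult_map:
  assumes "X \<subseteq> fsvec" "Y \<subseteq> fsvec" "\<forall>a\<in>X. \<forall>b\<in>Y. mul a b = mul b a"
  shows "tensor_hopf_morphism H X Y mult_map"
proof -
  have "tspan X Y \<subseteq> fsvec"
    using assms(1,2) by (force elim!: tspanE intro!: tensor_sum_fsvec)
  then show ?thesis
    unfolding tensor_hopf_morphism_def using assms fs_linear_mult_map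
    by (auto simp: fs_linear_def tone_def mult_map_tensor one_fsvec mul_one_left
        mult_map_tmult mult_map_comult mult_map_counit)
qed

lemma normalized_morphism_tensor:
  assumes X: "hopf_subalgebra H X" and Y: "hopf_subalgebra H Y"
    and p: "tensor_hopf_morphism H X Y p"
    and pX: "\<forall>a\<in>X. p (tensor a \<one>) = a" and pY: "\<forall>b\<in>Y. p (tensor \<one> b) = b"
    and a: "a \<in> X" and b: "b \<in> Y"
  shows "p (tensor a b) = mul a b" and "p (tensor a b) = mul b a"
proof -
  have fs: "a \<in> fsvec" "b \<in> fsvec"
    using hopf_subalgebra_fsvec[OF X] hopf_subalgebra_fsvec[OF Y] a b by blast+
  have "tensor a \<one> \<in> tspan X Y" "tensor \<one> b \<in> tspan X Y"
    using a b hopf_subalgebra_one[OF X] hopf_subalgebra_one[OF Y] by (auto intro: tensor_in_tspan)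
  moreover have "\<forall>s\<in>tspan X Y. \<forall>t\<in>tspan X Y. p (tmult H s t) = mul (p s) (p t)"
    using p unfolding tensor_hopf_morphism_def by blast
  moreover have "tmult H (tensor a \<one>) (tensor \<one> b) = tensor a b"
    and "tmult H (tensor \<one> b) (tensor a \<one>) = tensor a b"
    using tmult_tensor_sum[of 1 "\<lambda>_. a" "\<lambda>_. \<one>" 1 "\<lambda>_. \<one>" "\<lambda>_. b"]
      tmult_tensor_sum[of 1 "\<lambda>_. \<one>" "\<lambda>_. b" 1 "\<lambda>_. a" "\<lambda>_. \<one>"]
    using fs by (simp_all add: one_fsvec mul_one_left mul_one_right)
  ultimately show "p (tensor a b) = mul a b" and "p (tensor a b) = mul b a"
    using pX pY a b by metis+
qed

lemma normalized_morphism_eq_mult_map: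
  assumes X: "hopf_subalgebra H X" and Y: "hopf_subalgebra H Y"
    and p: "tensor_hopf_morphism H X Y p"
    and pX: "\<forall>a\<in>X. p (tensor a \<one>) = a" and pY: "\<forall>b\<in>Y. p (tensor \<one> b) = b"
    and t: "t \<in> tspan X Y"
  shows "p t = mult_map t"
proof -
  obtain n xs ys where xy: "\<forall>k<n. xs k \<in> X \<and> ys k \<in> Y" and t: "t = tensor_sum n xs ys"
    using t by (rule tspanE)
  have fs: "\<forall>k<n. xs k \<in> fsvec \<and> ys k \<in> fsvec"
    using xy hopf_subalgebra_fsvec[OF X] hopf_subalgebra_fsvec[OF Y] by blast
  have "p t = vsum {..<n} (\<lambda>k. p (tensor (xs k) (ys k)))"
    using p fs unfolding t tensor_hopf_morphism_def
    by (intro linear_on_vsum) (auto intro: tensor_fsvec)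
  also have "\<dots> = mult_map t"
    using normalized_morphism_tensor(1)[OF X Y p pX pY] xy fs by (simp add: t mult_map_tensor_sum)
  finally show ?thesis .
qed

lemma ex_normalized_morphism_iff_commute:
  assumes X: "hopf_subalgebra H X" and Y: "hopf_subalgebra H Y"
  shows "(\<exists>p. tensor_hopf_morphism H X Y p \<and>
            (\<forall>a\<in>X. p (tensor a \<one>) = a) \<and> (\<forall>b\<in>Y. p (tensor \<one> b) = b))
     \<longleftrightarrow> (\<forall>a\<in>X. \<forall>b\<in>Y. mul a b = mul b a)"
proof
  assume "\<exists>p. tensor_hopf_morphism H X Y p \<and>
            (\<forall>a\<in>X. p (tensor a \<one>) = a) \<and> (\<forall>b\<in>Y. p (tensor \<one> b) = b)"
  then show "\<forall>a\<in>X. \<forall>b\<in>Y. mul a b = mul b a"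
    using normalized_morphism_tensor[OF X Y] by metis
next
  assume "\<forall>a\<in>X. \<forall>b\<in>Y. mul a b = mul b a"
  then show "\<exists>p. tensor_hopf_morphism H X Y p \<and>
            (\<forall>a\<in>X. p (tensor a \<one>) = a) \<and> (\<forall>b\<in>Y. p (tensor \<one> b) = b)"
    using tensor_hopf_morphism_mult_map hopf_subalgebra_fsvec[OF X] hopf_subalgebra_fsvec[OF Y]
    by (intro exI[of _ mult_map]) (auto simp: mult_map_tensor one_fsvec mul_one_left mul_one_right)
qed

subsection \<open>The Hopf commutator\<close>

definition commutator :: "('b \<Rightarrow> 'k) \<Rightarrow> ('b \<Rightarrow> 'k) \<Rightarrow> 'b \<Rightarrow> 'k" where
  "commutator a b = lsum (\<Delta> a) (\<lambda>(i, j). lsum (\<Delta> b) (\<lambda>(k, l).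
     mul (mul (mul (bas i) (bas k)) (S (bas j))) (S (bas l))))"

lemma fs_linear_commutator_left: "y \<in> fsvec \<Longrightarrow> fs_linear (\<lambda>x. commutator x y)"
  unfolding commutator_def
  by (rule fs_linear_comp[OF fs_linear_comult fs_linear_lsum])
    (auto intro!: lsum_fsvec comult_fsvec fs_linear_intros split: prod.split)

lemma fs_linear_commutator_right: "x \<in> fsvec \<Longrightarrow> fs_linear (\<lambda>y. commutator x y)"
  unfolding commutator_def split_def lsum_swap[of "\<Delta> x"]
  by (rule fs_linear_comp[OF fs_linear_comult fs_linear_lsum])
    (auto intro!: lsum_fsvec comult_fsvec fs_linear_intros)

lemma commutator_fsvec: "x \<in> fsvec \<Longrightarrow> y \<in> fsvec \<Longrightarrow> commutator x y \<in> fsvec"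
  by (rule fs_linear_fsvec[OF fs_linear_commutator_left])

lemma commutator_tensor_sum:
  assumes "\<Delta> a = tensor_sum N xs xs'" "\<Delta> b = tensor_sum K ys ys'"
    and "\<forall>n<N. xs n \<in> fsvec \<and> xs' n \<in> fsvec" "\<forall>k<K. ys k \<in> fsvec \<and> ys' k \<in> fsvec"
  shows "commutator a b = vsum {..<N} (\<lambda>n. vsum {..<K} (\<lambda>k.
           mul (mul (mul (xs n) (ys k)) (S (xs' n))) (S (ys' k))))"
  unfolding commutator_def assms(1,2) using assms(3,4)
  by (rule lsum_tensor_sum_multilinear4[where Q = "\<lambda>x x' y y'. mul (mul (mul x y) (S x')) (S y')"])
    (auto intro!: fs_linear_intros)

lemma commutator_of_commuting:
  assumes X: "hopf_subalgebra H X" and Y: "hopf_subalgebra H Y"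
    and comm: "\<forall>a\<in>X. \<forall>b\<in>Y. mul a b = mul b a" and a: "a \<in> X" and b: "b \<in> Y"
  shows "commutator a b = smul (\<epsilon> a * \<epsilon> b) \<one>"
proof -
  obtain N xs xs' where xs: "\<forall>n<N. xs n \<in> X \<and> xs' n \<in> X" "\<Delta> a = tensor_sum N xs xs'"
    using hopf_subalgebra_comult[OF X a] by (rule tspanE)
  obtain K ys ys' where ys: "\<forall>k<K. ys k \<in> Y \<and> ys' k \<in> Y" "\<Delta> b = tensor_sum K ys ys'"
    using hopf_subalgebra_comult[OF Y b] by (rule tspanE)
  have fs: "a \<in> fsvec" "b \<in> fsvec"
    "\<forall>n<N. xs n \<in> fsvec \<and> xs' n \<in> fsvec" "\<forall>k<K. ys k \<in> fsvec \<and> ys' k \<in> fsvec"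
    using hopf_subalgebra_fsvec[OF X] hopf_subalgebra_fsvec[OF Y] a b xs(1) ys(1) by blast+
  have "commutator a b = vsum {..<N} (\<lambda>n. vsum {..<K} (\<lambda>k.
           mul (mul (mul (xs n) (ys k)) (S (xs' n))) (S (ys' k))))"
    using commutator_tensor_sum[OF xs(2) ys(2) fs(3,4)] .
  also have "\<dots> = vsum {..<K} (\<lambda>k. vsum {..<N} (\<lambda>n.
           mul (mul (ys k) (mul (xs n) (S (xs' n)))) (S (ys' k))))"
  proof (rule ext, subst sum.swap, intro sum.cong refl)
    fix c k n assume "k \<in> {..<K}" "n \<in> {..<N}"
    then have "mul (xs n) (ys k) = mul (ys k) (xs n)" "xs n \<in> fsvec" "ys k \<in> fsvec" "xs' n \<in> fsvec"
      using xs(1) ys(1) fs comm by blast+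
    then show "mul (mul (mul (xs n) (ys k)) (S (xs' n))) (S (ys' k)) c
             = mul (mul (ys k) (mul (xs n) (S (xs' n)))) (S (ys' k)) c"
      using mul_assoc[of "ys k" "xs n" "S (xs' n)"] by (simp add: antipode_fsvec)
  qed
  also have "\<dots> = vsum {..<K} (\<lambda>k. mul (mul (ys k) (vsum {..<N} (\<lambda>n. mul (xs n) (S (xs' n)))))
           (S (ys' k)))"
    using fs by (intro ext sum.cong refl, subst linear_on_vsum[where f = "\<lambda>v. mul (mul _ v) _"])
      (auto intro!: fs_linear_intros)
  also have "\<dots> = smul (\<epsilon> a) (vsum {..<K} (\<lambda>k. mul (ys k) (S (ys' k))))"
    using fs by (simp add: antipode_right_tensor_sum[OF _ xs(2)] mul_smul_right mul_smul_left
        mul_one_right one_fsvec antipode_fsvec mul_fsvec) (simp add: smul_def sum_distrib_left)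
  also have "\<dots> = smul (\<epsilon> a * \<epsilon> b) \<one>"
    using fs by (simp add: antipode_right_tensor_sum[OF _ ys(2)] smul_def mult.assoc)
  finally show ?thesis .
qed

lemma antipode_sandwich:
  assumes u: "u \<in> fsvec" and f: "fs_linear f"
  shows "lsum (\<Delta> u) (\<lambda>z. lsum (\<Delta> (bas (fst z))) (\<lambda>z'.
           mul (mul (f (bas (fst z'))) (S (bas (snd z')))) (bas (snd z)))) = f u"
proof -
  have "lsum (\<Delta> u) (\<lambda>z. lsum (\<Delta> (bas (fst z))) (\<lambda>z'.
           mul (mul (f (bas (fst z'))) (S (bas (snd z')))) (bas (snd z))))
      = lsum (\<Delta> u) (\<lambda>z. lsum (\<Delta> (bas (snd z))) (\<lambda>z'.
           mul (mul (f (bas (fst z))) (S (bas (fst z')))) (bas (snd z'))))"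
    by (rule lsum_comult_coassoc[OF u])
  also have "\<dots> = lsum (\<Delta> u) (\<lambda>z. smul (\<epsilon> (bas (snd z))) (f (bas (fst z))))"
    using lsum_comult_antipode_cancel[OF bas_fsvec _ fs_linear_id] f
    by (simp add: fs_linear_fsvec bas_fsvec)
  also have "\<dots> = f u"
    by (rule lsum_comult_counit_right[OF u f])
  finally show ?thesis .
qed

lemma lsum_commutator_mul:
  assumes x: "x \<in> fsvec" and b: "b \<in> fsvec"
  shows "lsum (\<Delta> b) (\<lambda>(k, l). mul (commutator x (bas k)) (bas l))
       = lsum (\<Delta> x) (\<lambda>(i, j). mul (mul (bas i) b) (S (bas j)))"
proof -
  have "lsum (\<Delta> b) (\<lambda>(k, l). mul (commutator x (bas k)) (bas l))
      = lsum (\<Delta> b) (\<lambda>w. lsum (\<Delta> x) (\<lambda>z. lsum (\<Delta> (bas (fst w))) (\<lambda>w'.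
          mul (mul (mul (mul (bas (fst z)) (bas (fst w'))) (S (bas (snd z)))) (S (bas (snd w'))))
            (bas (snd w)))))"
    unfolding commutator_def split_def using x
    by (simp add: mul_lsum_left comult_fsvec lsum_fsvec bas_fsvec mul_fsvec antipode_fsvec)
  also have "\<dots> = lsum (\<Delta> x) (\<lambda>z. mul (mul (bas (fst z)) b) (S (bas (snd z))))"
    unfolding lsum_swap[of "\<Delta> b"]
    using antipode_sandwich[OF b, where f = "\<lambda>v. mul (mul (bas _) v) (S (bas _))"]
    by (simp add: fs_linear_intros fs_linear_mul_right fs_linear_mul_left)
  finally show ?thesis by (simp add: split_def)
qed

definition commutator_reassembly :: "('b \<Rightarrow> 'k) \<Rightarrow> ('b \<Rightarrow> 'k) \<Rightarrow> 'b \<Rightarrow> 'k" where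
  "commutator_reassembly a b = lsum (\<Delta> a) (\<lambda>(i, j). lsum (\<Delta> b) (\<lambda>(k, l).
     mul (mul (commutator (bas i) (bas k)) (bas l)) (bas j)))"

lemma commutator_reassembly_eq_mul:
  assumes a: "a \<in> fsvec" and b: "b \<in> fsvec"
  shows "commutator_reassembly a b = mul a b"
proof -
  have "commutator_reassembly a b = lsum (\<Delta> a) (\<lambda>(i, j).
      mul (lsum (\<Delta> b) (\<lambda>(k, l). mul (commutator (bas i) (bas k)) (bas l))) (bas j))"
    unfolding commutator_reassembly_def using b
    by (simp add: mul_lsum_left comult_fsvec bas_fsvec mul_fsvec commutator_fsvec split_def)
  also have "\<dots> = lsum (\<Delta> a) (\<lambda>z. lsum (\<Delta> (bas (fst z))) (\<lambda>z'.
      mul (mul (mul (bas (fst z')) b) (S (bas (snd z')))) (bas (snd z))))"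
    using b by (simp add: lsum_commutator_mul[unfolded split_def] mul_lsum_left comult_fsvec
        bas_fsvec mul_fsvec antipode_fsvec split_def)
  also have "\<dots> = mul a b"
    by (rule antipode_sandwich[OF a fs_linear_mul_left[OF b]])
  finally show ?thesis .
qed

lemma commutator_reassembly_of_trivial_commutator:
  assumes X: "hopf_subalgebra H X" and Y: "hopf_subalgebra H Y"
    and trivial: "\<forall>a\<in>X. \<forall>b\<in>Y. commutator a b = smul (\<epsilon> a * \<epsilon> b) \<one>"
    and a: "a \<in> X" and b: "b \<in> Y"
  shows "commutator_reassembly a b = mul b a"
proof -
  obtain N xs xs' where xs: "\<forall>n<N. xs n \<in> X \<and> xs' n \<in> X" "\<Delta> a = tensor_sum N xs xs'"
    using hopf_subalgebra_comult[OF X a] by (rule tspanE)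
  obtain K ys ys' where ys: "\<forall>k<K. ys k \<in> Y \<and> ys' k \<in> Y" "\<Delta> b = tensor_sum K ys ys'"
    using hopf_subalgebra_comult[OF Y b] by (rule tspanE)
  have fs: "a \<in> fsvec" "b \<in> fsvec"
    "\<forall>n<N. xs n \<in> fsvec \<and> xs' n \<in> fsvec" "\<forall>k<K. ys k \<in> fsvec \<and> ys' k \<in> fsvec"
    using hopf_subalgebra_fsvec[OF X] hopf_subalgebra_fsvec[OF Y] a b xs(1) ys(1) by blast+
  have "commutator_reassembly a b
      = vsum {..<N} (\<lambda>n. vsum {..<K} (\<lambda>k. mul (mul (commutator (xs n) (ys k)) (ys' k)) (xs' n)))"
    unfolding commutator_reassembly_def xs(2) ys(2) using fs(3,4)
    by (rule lsum_tensor_sum_multilinear4[where Q = "\<lambda>x x' y y'. mul (mul (commutator x y) y') x'"])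
      (auto intro!: fs_linear_intros fs_linear_commutator_left fs_linear_commutator_right
        commutator_fsvec)
  also have "\<dots> = vsum {..<K} (\<lambda>k. vsum {..<N} (\<lambda>n.
      mul (smul (\<epsilon> (ys k)) (ys' k)) (smul (\<epsilon> (xs n)) (xs' n))))"
    using fs xs(1) ys(1) trivial
    by (subst sum.swap) (intro ext sum.cong refl; simp add: mul_smul_left mul_smul_right
        mul_one_left mul_fsvec smul_fsvec one_fsvec; simp add: smul_def)
  also have "\<dots> = mul (vsum {..<K} (\<lambda>k. smul (\<epsilon> (ys k)) (ys' k)))
      (vsum {..<N} (\<lambda>n. smul (\<epsilon> (xs n)) (xs' n)))"
    using fs by (subst mul_vsum_vsum) (auto intro: smul_fsvec)
  also have "\<dots> = mul b a"
    using fs by (simp add: counit_left_tensor_sum[OF _ xs(2)] counit_left_tensor_sum[OF _ ys(2)])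
  finally show ?thesis .
qed

lemma commute_iff_commutator_trivial:
  assumes X: "hopf_subalgebra H X" and Y: "hopf_subalgebra H Y"
  shows "(\<forall>a\<in>X. \<forall>b\<in>Y. mul a b = mul b a)
     \<longleftrightarrow> (\<forall>a\<in>X. \<forall>b\<in>Y. commutator a b = smul (\<epsilon> a * \<epsilon> b) \<one>)"
  using commutator_of_commuting[OF X Y] commutator_reassembly_of_trivial_commutator[OF X Y]
    commutator_reassembly_eq_mul hopf_subalgebra_fsvec[OF X] hopf_subalgebra_fsvec[OF Y]
  by (metis subsetD)

end

theorem lemma4p1:
  fixes H :: "('b, 'k::field) hopf" and X Y :: "('b \<Rightarrow> 'k) set"
  assumes "hopf_algebra H" and "cocommutative H"
    and "hopf_subalgebra H X" and "hopf_subalgebra H Y"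
  shows "((\<exists>p. tensor_hopf_morphism H X Y p \<and>
             (\<forall>a\<in>X. p (tensor a (hone H)) = a) \<and> (\<forall>b\<in>Y. p (tensor (hone H) b) = b))
          \<longleftrightarrow> (\<forall>a\<in>X. \<forall>b\<in>Y. hmult H a b = hmult H b a))
       \<and> ((\<forall>a\<in>X. \<forall>b\<in>Y. hmult H a b = hmult H b a)
          \<longleftrightarrow> (\<forall>a\<in>X. \<forall>b\<in>Y.
                 lsum (hcomult H a) (\<lambda>(i, j). lsum (hcomult H b) (\<lambda>(k, l).
                    hmult H (hmult H (hmult H (bas i) (bas k)) (hantipode H (bas j)))
                            (hantipode H (bas l))))
                 = smul (hcounit H a * hcounit H b) (hone H)))
       \<and> (\<forall>p q. tensor_hopf_morphism H X Y p \<and>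
                 (\<forall>a\<in>X. p (tensor a (hone H)) = a) \<and> (\<forall>b\<in>Y. p (tensor (hone H) b) = b) \<and>
                 tensor_hopf_morphism H X Y q \<and>
                 (\<forall>a\<in>X. q (tensor a (hone H)) = a) \<and> (\<forall>b\<in>Y. q (tensor (hone H) b) = b)
               \<longrightarrow> (\<forall>t\<in>tspan X Y. p t = q t))"
proof -
  interpret hopf_alg H by unfold_locales (fact assms(1))
  have "\<forall>t\<in>tspan X Y. p t = q t"
    if "tensor_hopf_morphism H X Y p" "\<forall>a\<in>X. p (tensor a \<one>) = a" "\<forall>b\<in>Y. p (tensor \<one> b) = b"
      "tensor_hopf_morphism H X Y q" "\<forall>a\<in>X. q (tensor a \<one>) = a" "\<forall>b\<in>Y. q (tensor \<one> b) = b"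
    for p q
    using normalized_morphism_eq_mult_map[OF assms(3,4)] that by metis
  then show ?thesis
    using ex_normalized_morphism_iff_commute[OF assms(3,4)] commute_iff_commutator_trivial[OF assms(3,4)]
    unfolding commutator_def by blast
qed

end
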